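(* Let $P=(p_1,p_2,p_3,p_4)$ be four points in general position in $\mathbb{R}^2$, let $f=(f_{ij})_{1\le i<j\le4}$ be arbitrary reals, let $w_{ij}=1/(\det(p_i,p_j,p_k)\det(p_i,p_j,p_l))$ with $\{k,l\}=\{1,2,3,4\}\setminus\{i,j\}$, and put $R=\sum_{1\le i<j\le4}w_{ij}f_{ij}$. For a pair $kl$, let $G_{kl}$ be the complete graph on $P$ minus the edge $kl$. Then there exists $v\in\bar X_f(P)$ with $E(v)=G_{kl}$ (and then $v$ is a vertex of $\bar X_f(P)$) if and only if $R$ and $w_{kl}$ have opposite signs (i.e. $R\,w_{kl}<0$).
   Context: $\det(q_0,q_1,q_2)$ is the determinant of the $3\times3$ matrix with columns $(q_0,1),(q_1,1),(q_2,1)$; general position: no three points collinear. Infinitesimal motions $v\in(\mathbb{R}^2)^4$ are normalized by $v_1^1=v_1^2=v_2^1=0$ (with $p_1,p_2$ having different $y$-coordinates). $\bar X_f(P)$ is the set of normalized $v$ with $\langle p_i-p_j,v_i-v_j\rangle\ge f_{ij}$ for all $i<j$; $E(v)$ is the set of pairs $ij$ with $\langle p_i-p_j,v_i-v_j\rangle=f_{ij}$. *)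

theory Defs
  imports "HOL-Analysis.Analysis"
begin

text \<open>Configurations of four points in the plane are elements of (real \<times> real)^4;
  the four indices are the elements 1, 2, 3, 4 of the numeral type 4.
  Infinitesimal motions v live in the same space.\<close>

text \<open>det(q0,q1,q2): determinant of the 3x3 matrix with columns (q0,1),(q1,1),(q2,1).\<close>
definition det3 :: "real \<times> real \<Rightarrow> real \<times> real \<Rightarrow> real \<times> real \<Rightarrow> real" where
  "det3 q0 q1 q2 =
     fst q0 * snd q1 + fst q1 * snd q2 + fst q2 * snd q0
   - fst q2 * snd q1 - fst q0 * snd q2 - fst q1 * snd q0"

definition gen_pos :: "(real \<times> real)^4 \<Rightarrow> bool" where
  "gen_pos p \<longleftrightarrow> (\<forall>i j k. distinct [i, j, k] \<longrightarrow> det3 (p$i) (p$j) (p$k) \<noteq> 0)"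

definition pairs4 :: "(4 \<times> 4) set" where
  "pairs4 = {(1,2), (1,3), (1,4), (2,3), (2,4), (3,4)}"

definition wgt :: "(real \<times> real)^4 \<Rightarrow> 4 \<Rightarrow> 4 \<Rightarrow> real" where
  "wgt p i j = 1 / (\<Prod>k\<in>UNIV - {i, j}. det3 (p$i) (p$j) (p$k))"

definition Rsum :: "(4 \<Rightarrow> 4 \<Rightarrow> real) \<Rightarrow> (real \<times> real)^4 \<Rightarrow> real" where
  "Rsum f p = (\<Sum>(i,j)\<in>pairs4. wgt p i j * f i j)"

definition normalized :: "(real \<times> real)^4 \<Rightarrow> bool" where
  "normalized v \<longleftrightarrow> fst (v$1) = 0 \<and> snd (v$1) = 0 \<and> fst (v$2) = 0"

definition edge_val :: "(real \<times> real)^4 \<Rightarrow> (real \<times> real)^4 \<Rightarrow> 4 \<Rightarrow> 4 \<Rightarrow> real" where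
  "edge_val p v i j = (p$i - p$j) \<bullet> (v$i - v$j)"

definition Xbar :: "(4 \<Rightarrow> 4 \<Rightarrow> real) \<Rightarrow> (real \<times> real)^4 \<Rightarrow> ((real \<times> real)^4) set" where
  "Xbar f p = {v. normalized v \<and> (\<forall>(i,j)\<in>pairs4. edge_val p v i j \<ge> f i j)}"

definition Eset :: "(4 \<Rightarrow> 4 \<Rightarrow> real) \<Rightarrow> (real \<times> real)^4 \<Rightarrow> (real \<times> real)^4 \<Rightarrow> (4 \<times> 4) set" where
  "Eset f p v = {(i,j)\<in>pairs4. edge_val p v i j = f i j}"

end

theory Submission
  imports Defs
begin

text \<open>
  The weights w_ij form a self-stress of the complete framework on P: for every infinitesimal
  motion v one has sum_ij w_ij <p_i - p_j, v_i - v_j> = 0, a polynomial identity in the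
  coordinates once the denominators are cleared. Conversely, the normalization removes the
  trivial motions, so on normalized motions the edge map v \<mapsto> (<p_i - p_j, v_i - v_j>)_ij is
  injective, and its image is the whole hyperplane sum_ij w_ij e_ij = 0 (p_2, p_3 and p_4 can be
  placed one after the other, and the last edge 34 is then forced by the stress).
  So a normalized v that is tight on all edges but kl and slack on kl exists iff
  f + d 1_kl lies on that hyperplane for some d > 0, i.e. iff R + w_kl d = 0 for some d > 0,
  i.e. iff R w_kl < 0. Such a v is the only point of X_f(P) tight on these five edges, hence
  a vertex.
\<close>

lemma Ball_remove_iff: "c \<in> A \<Longrightarrow> (\<forall>x\<in>A. P x) \<longleftrightarrow> P c \<and> (\<forall>x\<in>A - {c}. P x)"
  by blast

lemma extreme_point_of_unique_tight:
  fixes g :: "'c \<Rightarrow> 'a::real_vector \<Rightarrow> real"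
  assumes "v \<in> X"
    and linear: "\<And>c. c \<in> T \<Longrightarrow> linear (g c)"
    and valid: "\<And>x c. x \<in> X \<Longrightarrow> c \<in> T \<Longrightarrow> h c \<le> g c x"
    and tight: "\<And>c. c \<in> T \<Longrightarrow> g c v = h c"
    and unique: "\<And>x. x \<in> X \<Longrightarrow> \<forall>c \<in> T. g c x = h c \<Longrightarrow> x = v"
  shows "v extreme_point_of X"
  unfolding extreme_point_of_def
proof (intro conjI \<open>v \<in> X\<close> ballI)
  fix a b assume "a \<in> X" "b \<in> X"
  show "v \<notin> open_segment a b"
  proof
    assume seg: "v \<in> open_segment a b"
    then have "a \<noteq> v"
      by (auto simp: open_segment_def)
    obtain u where u: "0 < u" "u < 1" and v: "v = (1 - u) *\<^sub>R a + u *\<^sub>R b"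
      using seg unfolding in_segment by blast
    have "g c a = h c" if "c \<in> T" for c
    proof -
      have "h c = (1 - u) * g c a + u * g c b"
        using tight[OF that] linear[OF that] unfolding v by (simp add: linear_add linear_scale)
      then have "(1 - u) * (g c a - h c) = - u * (g c b - h c)"
        by (simp add: algebra_simps)
      also have "\<dots> \<le> 0"
        using u valid[OF \<open>b \<in> X\<close> that] by simp
      finally have "g c a \<le> h c"
        using u by (simp add: mult_le_0_iff)
      then show ?thesis
        using valid[OF \<open>a \<in> X\<close> that] by simp
    qed
    then show False
      using unique \<open>a \<in> X\<close> \<open>a \<noteq> v\<close> by blast
  qed
qed

lemma det3_eq_cross:
  "det3 q0 q1 q2 = fst (q0 - q2) * snd (q1 - q2) - snd (q0 - q2) * fst (q1 - q2)"
  unfolding det3_def by (simp add: algebra_simps)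

lemma orthogonal_to_independent_pair_eq_0:
  fixes a b u :: "real \<times> real"
  assumes "fst a * snd b - snd a * fst b \<noteq> 0" "a \<bullet> u = 0" "b \<bullet> u = 0"
  shows "u = 0"
proof -
  let ?D = "fst a * snd b - snd a * fst b"
  have "fst u * ?D = snd b * (a \<bullet> u) - snd a * (b \<bullet> u)"
    and "snd u * ?D = fst a * (b \<bullet> u) - fst b * (a \<bullet> u)"
    by (simp_all add: inner_prod_def algebra_simps)
  then show ?thesis using assms by (simp add: prod_eq_iff)
qed

lemma exists_inner_eq_independent_pair:
  fixes a b :: "real \<times> real"
  assumes "fst a * snd b - snd a * fst b \<noteq> 0"
  shows "\<exists>u. a \<bullet> u = r \<and> b \<bullet> u = s"
proof -
  define D where "D = fst a * snd b - snd a * fst b"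
  let ?u = "((r * snd b - s * snd a) / D, (s * fst a - r * fst b) / D)"
  have "D \<noteq> 0" using assms unfolding D_def .
  then have "a \<bullet> ?u = r" "b \<bullet> ?u = s"
    by (simp_all add: inner_prod_def divide_simps) (simp_all add: D_def algebra_simps)
  then show ?thesis by blast
qed

lemma exists_vertex_motion:
  fixes q1 q2 q3 u1 u2 :: "real \<times> real"
  assumes "det3 q1 q2 q3 \<noteq> 0"
  shows "\<exists>u3. (q1 - q3) \<bullet> (u1 - u3) = c1 \<and> (q2 - q3) \<bullet> (u2 - u3) = c2"
proof -
  obtain u where "(q1 - q3) \<bullet> u = (q1 - q3) \<bullet> u1 - c1" "(q2 - q3) \<bullet> u = (q2 - q3) \<bullet> u2 - c2"
    using exists_inner_eq_independent_pair assms unfolding det3_eq_cross by blast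
  then have "(q1 - q3) \<bullet> (u1 - u) = c1 \<and> (q2 - q3) \<bullet> (u2 - u) = c2"
    by (simp add: inner_diff_right)
  then show ?thesis ..
qed

lemma sum_pairs4:
  "(\<Sum>(i, j) \<in> pairs4. g i j) = g 1 2 + g 1 3 + g 1 4 + g 2 3 + g 2 4 + g 3 4"
  unfolding pairs4_def by (simp add: add.assoc)

lemma wgt_pairs4:
  "wgt p 1 2 = 1 / (det3 (p$1) (p$2) (p$3) * det3 (p$1) (p$2) (p$4))"
  "wgt p 1 3 = - 1 / (det3 (p$1) (p$2) (p$3) * det3 (p$1) (p$3) (p$4))"
  "wgt p 1 4 = 1 / (det3 (p$1) (p$2) (p$4) * det3 (p$1) (p$3) (p$4))"
  "wgt p 2 3 = 1 / (det3 (p$1) (p$2) (p$3) * det3 (p$2) (p$3) (p$4))"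
  "wgt p 2 4 = - 1 / (det3 (p$1) (p$2) (p$4) * det3 (p$2) (p$3) (p$4))"
  "wgt p 3 4 = 1 / (det3 (p$1) (p$3) (p$4) * det3 (p$2) (p$3) (p$4))"
proof -
  have "UNIV - {1, 2} = {3, 4::4}" "UNIV - {1, 3} = {2, 4::4}" "UNIV - {1, 4} = {2, 3::4}"
     "UNIV - {2, 3} = {1, 4::4}" "UNIV - {2, 4} = {1, 3::4}" "UNIV - {3, 4} = {1, 2::4}"
    unfolding UNIV_4 by auto
  moreover have
    "det3 (p$1) (p$3) (p$2) = - det3 (p$1) (p$2) (p$3)" "det3 (p$2) (p$3) (p$1) = det3 (p$1) (p$2) (p$3)"
    "det3 (p$1) (p$4) (p$2) = - det3 (p$1) (p$2) (p$4)" "det3 (p$2) (p$4) (p$1) = det3 (p$1) (p$2) (p$4)"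
    "det3 (p$1) (p$4) (p$3) = - det3 (p$1) (p$3) (p$4)" "det3 (p$3) (p$4) (p$1) = det3 (p$1) (p$3) (p$4)"
    "det3 (p$2) (p$4) (p$3) = - det3 (p$2) (p$3) (p$4)" "det3 (p$3) (p$4) (p$2) = det3 (p$2) (p$3) (p$4)"
    unfolding det3_def by algebra+
  ultimately show
    "wgt p 1 2 = 1 / (det3 (p$1) (p$2) (p$3) * det3 (p$1) (p$2) (p$4))"
    "wgt p 1 3 = - 1 / (det3 (p$1) (p$2) (p$3) * det3 (p$1) (p$3) (p$4))"
    "wgt p 1 4 = 1 / (det3 (p$1) (p$2) (p$4) * det3 (p$1) (p$3) (p$4))"
    "wgt p 2 3 = 1 / (det3 (p$1) (p$2) (p$3) * det3 (p$2) (p$3) (p$4))"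
    "wgt p 2 4 = - 1 / (det3 (p$1) (p$2) (p$4) * det3 (p$2) (p$3) (p$4))"
    "wgt p 3 4 = 1 / (det3 (p$1) (p$3) (p$4) * det3 (p$2) (p$3) (p$4))"
    unfolding wgt_def by simp_all
qed

lemma wgt_nonzero:
  assumes "gen_pos p" "i \<noteq> j"
  shows "wgt p i j \<noteq> 0"
  using assms unfolding wgt_def gen_pos_def by auto

lemma Rsum_eq_Rsum_add:
  assumes "(k, l) \<in> pairs4" "\<forall>(i, j) \<in> pairs4 - {(k, l)}. e i j = f i j"
  shows "Rsum e p = Rsum f p + wgt p k l * (e k l - f k l)"
proof -
  have fin: "finite pairs4" unfolding pairs4_def by simp
  have "(\<Sum>(i, j) \<in> pairs4 - {(k, l)}. wgt p i j * e i j)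
      = (\<Sum>(i, j) \<in> pairs4 - {(k, l)}. wgt p i j * f i j)"
    using assms(2) by (intro sum.cong) (auto simp: case_prod_beta)
  then show ?thesis
    unfolding Rsum_def sum.remove[OF fin assms(1)] by (simp add: algebra_simps)
qed

lemma Rsum_edge_val_eq_0:
  assumes "gen_pos p"
  shows "Rsum (edge_val p v) p = 0"
proof -
  let ?D = "\<lambda>i j k. det3 (p$i) (p$j) (p$k)" and ?e = "edge_val p v"
  have nz: "?D i j k \<noteq> 0" if "distinct [i, j, k]" for i j k
    using assms that unfolding gen_pos_def by blast
  have "Rsum ?e p * (?D 1 2 3 * ?D 1 2 4 * ?D 1 3 4 * ?D 2 3 4) =
      ?e 1 2 * ?D 1 3 4 * ?D 2 3 4 - ?e 1 3 * ?D 1 2 4 * ?D 2 3 4 + ?e 1 4 * ?D 1 2 3 * ?D 2 3 4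
    + ?e 2 3 * ?D 1 2 4 * ?D 1 3 4 - ?e 2 4 * ?D 1 2 3 * ?D 1 3 4 + ?e 3 4 * ?D 1 2 3 * ?D 1 2 4"
    unfolding Rsum_def sum_pairs4 wgt_pairs4
    using nz[of 1 2 3] nz[of 1 2 4] nz[of 1 3 4] nz[of 2 3 4] by (simp add: field_simps)
  also have "\<dots> = 0"
    unfolding edge_val_def inner_prod_def det3_def by simp algebra
  finally show ?thesis
    using nz[of 1 2 3] nz[of 1 2 4] nz[of 1 3 4] nz[of 2 3 4] by simp
qed

lemma linear_edge_val: "linear (\<lambda>v. edge_val p v i j)"
  unfolding edge_val_def by (intro linearI) (simp_all add: inner_simps algebra_simps)

lemma edge_val_eq_0_imp_eq_0:
  assumes gp: "gen_pos p" and y: "snd (p$1) \<noteq> snd (p$2)" and "normalized v"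
    and zero: "\<forall>(i, j) \<in> pairs4. edge_val p v i j = 0"
  shows "v = 0"
proof -
  have v1: "v$1 = 0" and "fst (v$2) = 0"
    using \<open>normalized v\<close> unfolding normalized_def by (simp_all add: prod_eq_iff)
  moreover have "edge_val p v 1 2 = 0"
    using zero unfolding pairs4_def by simp
  ultimately have v2: "v$2 = 0"
    using y by (simp add: edge_val_def inner_prod_def prod_eq_iff)
  have "v$m = 0" if m: "m = 3 \<or> m = 4" for m
  proof (rule orthogonal_to_independent_pair_eq_0)
    show "fst (p$1 - p$m) * snd (p$2 - p$m) - snd (p$1 - p$m) * fst (p$2 - p$m) \<noteq> 0"
      using gp m unfolding gen_pos_def det3_eq_cross[symmetric] by auto
    have "edge_val p v 1 m = 0" "edge_val p v 2 m = 0"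
      using zero m unfolding pairs4_def by auto
    then show "(p$1 - p$m) \<bullet> v$m = 0" "(p$2 - p$m) \<bullet> v$m = 0"
      unfolding edge_val_def v1 v2 by simp_all
  qed
  then show ?thesis
    using v1 v2 by (simp add: vec_eq_iff forall_4)
qed

lemma normalized_edge_val_inj:
  assumes "gen_pos p" "snd (p$1) \<noteq> snd (p$2)" "normalized a" "normalized b"
    and "\<forall>(i, j) \<in> pairs4. edge_val p a i j = edge_val p b i j"
  shows "a = b"
proof -
  have "normalized (a - b)"
    using assms(3,4) unfolding normalized_def by simp
  moreover have "\<forall>(i, j) \<in> pairs4. edge_val p (a - b) i j = 0"
    using assms(5) linear_diff[OF linear_edge_val] by auto
  ultimately show ?thesis
    using edge_val_eq_0_imp_eq_0 assms(1,2) by fastforce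
qed

lemma exists_normalized_edge_val:
  assumes gp: "gen_pos p" and y: "snd (p$1) \<noteq> snd (p$2)" and stress: "Rsum e p = 0"
  shows "\<exists>v. normalized v \<and> (\<forall>(i, j) \<in> pairs4. edge_val p v i j = e i j)"
proof -
  define u2 :: "real \<times> real" where "u2 = (0, - e 1 2 / (snd (p$1) - snd (p$2)))"
  have det: "det3 (p$1) (p$2) (p$m) \<noteq> 0" if "m = 3 \<or> m = 4" for m
    using gp that unfolding gen_pos_def by auto
  obtain u3 where u3: "(p$1 - p$3) \<bullet> (0 - u3) = e 1 3" "(p$2 - p$3) \<bullet> (u2 - u3) = e 2 3"
    using exists_vertex_motion[OF det[of 3]] by blast
  obtain u4 where u4: "(p$1 - p$4) \<bullet> (0 - u4) = e 1 4" "(p$2 - p$4) \<bullet> (u2 - u4) = e 2 4"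
    using exists_vertex_motion[OF det[of 4]] by blast
  define v :: "(real \<times> real)^4"
    where "v = (\<chi> i. if i = 1 then 0 else if i = 2 then u2 else if i = 3 then u3 else u4)"
  have v: "v$1 = 0" "v$2 = u2" "v$3 = u3" "v$4 = u4"
    unfolding v_def by simp_all
  have "normalized v"
    unfolding normalized_def v u2_def by simp
  have "edge_val p v 1 2 = e 1 2"
    using y by (simp add: edge_val_def v u2_def inner_prod_def)
  then have five: "\<forall>(i, j) \<in> pairs4 - {(3, 4)}. edge_val p v i j = e i j"
    using u3 u4 unfolding pairs4_def by (auto simp: edge_val_def v)
  have "Rsum (edge_val p v) p = Rsum e p + wgt p 3 4 * (edge_val p v 3 4 - e 3 4)"
    using Rsum_eq_Rsum_add five unfolding pairs4_def by simp
  then have "edge_val p v 3 4 = e 3 4"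
    using stress Rsum_edge_val_eq_0[OF gp] wgt_nonzero[OF gp, of 3 4] by simp
  then show ?thesis
    using \<open>normalized v\<close> five unfolding pairs4_def by (intro exI[of _ v]) auto
qed

lemma Rsum_eq_wgt_mult_slack:
  assumes "gen_pos p" "(k, l) \<in> pairs4"
    and "\<forall>(i, j) \<in> pairs4 - {(k, l)}. edge_val p v i j = f i j"
  shows "Rsum f p = wgt p k l * (f k l - edge_val p v k l)"
  using Rsum_eq_Rsum_add[OF assms(2,3), of p] Rsum_edge_val_eq_0[OF assms(1), of v]
  by (simp add: algebra_simps)

lemma Rsum_mult_wgt_neg:
  assumes gp: "gen_pos p" and kl: "(k, l) \<in> pairs4"
    and tight: "\<forall>(i, j) \<in> pairs4 - {(k, l)}. edge_val p v i j = f i j"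
    and slack: "f k l < edge_val p v k l"
  shows "Rsum f p * wgt p k l < 0"
proof -
  have "wgt p k l \<noteq> 0"
    using wgt_nonzero[OF gp] kl unfolding pairs4_def by auto
  moreover have "Rsum f p * wgt p k l = - (wgt p k l)\<^sup>2 * (edge_val p v k l - f k l)"
    unfolding Rsum_eq_wgt_mult_slack[OF gp kl tight] by (simp add: power2_eq_square algebra_simps)
  ultimately show ?thesis
    using slack by (simp add: mult_pos_pos)
qed

lemma exists_normalized_tight_except:
  assumes gp: "gen_pos p" and y: "snd (p$1) \<noteq> snd (p$2)" and kl: "(k, l) \<in> pairs4"
    and neg: "Rsum f p * wgt p k l < 0"
  shows "\<exists>v. normalized v \<and> (\<forall>(i, j) \<in> pairs4 - {(k, l)}. edge_val p v i j = f i j)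
           \<and> f k l < edge_val p v k l"
proof -
  define d where "d = - Rsum f p / wgt p k l"
  define e where "e = (\<lambda>i j. if (i, j) = (k, l) then f k l + d else f i j)"
  have "d > 0"
    using neg unfolding d_def by (simp add: divide_less_0_iff mult_less_0_iff)
  have agree: "\<forall>(i, j) \<in> pairs4 - {(k, l)}. e i j = f i j"
    unfolding e_def by auto
  have "wgt p k l \<noteq> 0"
    using neg by auto
  then have "Rsum e p = 0"
    using Rsum_eq_Rsum_add[OF kl agree] unfolding d_def e_def by simp
  then obtain v where "normalized v" and v: "\<forall>(i, j) \<in> pairs4. edge_val p v i j = e i j"
    using exists_normalized_edge_val[OF gp y] by blast
  moreover have "(\<forall>(i, j) \<in> pairs4 - {(k, l)}. edge_val p v i j = f i j)
      \<and> f k l < edge_val p v k l"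
    using v kl \<open>d > 0\<close> unfolding e_def by (simp add: Ball_remove_iff) (auto simp: Ball_def)
  ultimately show ?thesis
    by blast
qed

lemma normalized_tight_except_unique:
  assumes gp: "gen_pos p" and y: "snd (p$1) \<noteq> snd (p$2)" and kl: "(k, l) \<in> pairs4"
    and "normalized a" "normalized b"
    and a: "\<forall>(i, j) \<in> pairs4 - {(k, l)}. edge_val p a i j = f i j"
    and b: "\<forall>(i, j) \<in> pairs4 - {(k, l)}. edge_val p b i j = f i j"
  shows "a = b"
proof (rule normalized_edge_val_inj[OF gp y \<open>normalized a\<close> \<open>normalized b\<close>])
  have "wgt p k l \<noteq> 0"
    using wgt_nonzero[OF gp] kl unfolding pairs4_def by auto
  then have "edge_val p a k l = edge_val p b k l"
    using Rsum_eq_wgt_mult_slack[OF gp kl a] Rsum_eq_wgt_mult_slack[OF gp kl b] by simp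
  then show "\<forall>(i, j) \<in> pairs4. edge_val p a i j = edge_val p b i j"
    using a b kl by (simp add: Ball_remove_iff) (auto simp: Ball_def)
qed

theorem lemma3p8:
  fixes p :: "(real \<times> real)^4" and f :: "4 \<Rightarrow> 4 \<Rightarrow> real" and k l :: 4
  assumes "gen_pos p"
    and "snd (p$1) \<noteq> snd (p$2)"
    and "(k, l) \<in> pairs4"
  shows "((\<exists>v\<in>Xbar f p. Eset f p v = pairs4 - {(k, l)}) \<longleftrightarrow> Rsum f p * wgt p k l < 0)
       \<and> (\<forall>v\<in>Xbar f p. Eset f p v = pairs4 - {(k, l)} \<longrightarrow> v extreme_point_of Xbar f p)"
proof -
  let ?tight = "\<lambda>v. \<forall>(i, j) \<in> pairs4 - {(k, l)}. edge_val p v i j = f i j"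
  have "Eset f p v = pairs4 - {(k, l)} \<longleftrightarrow> ?tight v \<and> edge_val p v k l \<noteq> f k l" for v
    using assms(3) unfolding Eset_def by auto
  then have witness_iff: "v \<in> Xbar f p \<and> Eset f p v = pairs4 - {(k, l)} \<longleftrightarrow>
      normalized v \<and> ?tight v \<and> f k l < edge_val p v k l" for v
    using assms(3) unfolding Xbar_def by (simp add: Ball_remove_iff) (auto simp: Ball_def)
  have "(\<exists>v\<in>Xbar f p. Eset f p v = pairs4 - {(k, l)}) \<longleftrightarrow> Rsum f p * wgt p k l < 0"
    using witness_iff exists_normalized_tight_except[OF assms] Rsum_mult_wgt_neg[OF assms(1,3)]
    by meson
  moreover have "v extreme_point_of Xbar f p"
    if "v \<in> Xbar f p" "Eset f p v = pairs4 - {(k, l)}" for v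
  proof -
    have "normalized v" "?tight v"
      using that witness_iff by blast+
    then show ?thesis
      by (intro extreme_point_of_unique_tight[where g = "\<lambda>c v. edge_val p v (fst c) (snd c)"
            and h = "\<lambda>c. f (fst c) (snd c)" and T = "pairs4 - {(k, l)}"])
        (use that(1) linear_edge_val normalized_tight_except_unique[OF assms]
          in \<open>auto simp: Xbar_def case_prod_beta\<close>)
  qed
  ultimately show ?thesis by blast
qed

end
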